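(* In the standing setting, suppose there are deterministic vectors $\boldsymbol l=(l^1,\dots,l^n)$, $\boldsymbol u=(u^1,\dots,u^n)\in\mathbb R^n_{+}$ such that, with probability one, $\boldsymbol l\le \boldsymbol z(t)/\|\boldsymbol z(t)\|\le\boldsymbol u$ (componentwise) for all sufficiently large $t$, and such that $\sum_j l^j\varphi^j_\eta>0$ for all $\eta$. Then $$\sum_{\eta\in\mathcal I}\pi_\eta\log\Big(\sum_{j=1}^n l^j\varphi^j_\eta\Big)\;\le\;\log\lambda_S\;\le\;\sum_{\eta\in\mathcal I}\pi_\eta\log\Big(\sum_{j=1}^n u^j\varphi^j_\eta\Big),$$ where $\varphi^j_\eta=\sum_{i=1}^n A^{ij}_\eta$ is the $j$-th column sum of $\boldsymbol A_\eta$.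
   Context: Standing setting: $\mathcal I$ is a finite or countable set of environmental states; $(\tau_t)$ is a homogeneous Markov chain on $\mathcal I$ with a unique stationary distribution $\boldsymbol\pi$ to which its transition probabilities converge geometrically; $\{\boldsymbol A_\eta\}$ is an ergodic family of nonnegative $n\times n$ matrices (there is $g$ such that all products of $g$ matrices of the family are entrywise positive, all entries are at most some $\beta>0$ and all positive entries at least some $\alpha>0$); the model is $\boldsymbol z(t+1)=\boldsymbol A_{\tau_{t+1}}\boldsymbol z(t)$ with fixed nonzero $\boldsymbol z(0)\ge0$; $\|\cdot\|$ is the $\ell^1$ norm; the SGR $\lambda_S$ is defined by $\log\lambda_S=\lim_t\frac1t\log\|\boldsymbol z(t)\|$ almost surely. *)

theory Defs
  imports "HOL-Probability.Probability"
begin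

definition l1norm :: "real ^ 'n \<Rightarrow> real" where
  "l1norm x = (\<Sum>i\<in>UNIV. \<bar>x $ i\<bar>)"

text \<open>Product A_{e_k} ... A_{e_1} of the matrices indexed by the list [e_1,...,e_k].\<close>
primrec matprod :: "('i \<Rightarrow> real ^ 'n ^ 'n) \<Rightarrow> 'i list \<Rightarrow> real ^ 'n ^ 'n" where
  "matprod A [] = mat 1"
| "matprod A (e # es) = matprod A es ** A e"

definition ergodic_family :: "('i \<Rightarrow> real ^ 'n ^ 'n) \<Rightarrow> bool" where
  "ergodic_family A \<longleftrightarrow>
     (\<forall>e i j. 0 \<le> A e $ i $ j) \<and>
     (\<exists>g::nat. g \<ge> 1 \<and> (\<forall>es. length es = g \<longrightarrow> (\<forall>i j. 0 < matprod A es $ i $ j))) \<and>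
     (\<exists>\<alpha> \<beta>::real. 0 < \<alpha> \<and> 0 < \<beta> \<and>
        (\<forall>e i j. A e $ i $ j \<le> \<beta>) \<and>
        (\<forall>e i j. 0 < A e $ i $ j \<longrightarrow> \<alpha> \<le> A e $ i $ j))"

definition colsum :: "('i \<Rightarrow> real ^ 'n ^ 'n) \<Rightarrow> 'i \<Rightarrow> 'n \<Rightarrow> real" where
  "colsum A e j = (\<Sum>i\<in>UNIV. A e $ i $ j)"

primrec nstep :: "('i \<Rightarrow> 'i \<Rightarrow> real) \<Rightarrow> nat \<Rightarrow> 'i \<Rightarrow> 'i \<Rightarrow> real" where
  "nstep p 0 i j = (if i = j then 1 else 0)"
| "nstep p (Suc n) i j = (\<Sum>\<^sub>\<infinity>k. nstep p n i k * p k j)"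

definition stochastic_kernel :: "('i \<Rightarrow> 'i \<Rightarrow> real) \<Rightarrow> bool" where
  "stochastic_kernel p \<longleftrightarrow> (\<forall>i j. 0 \<le> p i j) \<and> (\<forall>i. (\<lambda>j. p i j) summable_on UNIV \<and> (\<Sum>\<^sub>\<infinity>j. p i j) = 1)"

definition stationary_distribution :: "('i \<Rightarrow> 'i \<Rightarrow> real) \<Rightarrow> ('i \<Rightarrow> real) \<Rightarrow> bool" where
  "stationary_distribution p \<pi> \<longleftrightarrow>
     (\<forall>i. 0 \<le> \<pi> i) \<and> \<pi> summable_on UNIV \<and> (\<Sum>\<^sub>\<infinity>i. \<pi> i) = 1 \<and>
     (\<forall>j. (\<Sum>\<^sub>\<infinity>i. \<pi> i * p i j) = \<pi> j)"

definition markov_chain :: "'a measure \<Rightarrow> (nat \<Rightarrow> 'a \<Rightarrow> 'i) \<Rightarrow> ('i \<Rightarrow> 'i \<Rightarrow> real) \<Rightarrow> bool" where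
  "markov_chain M \<tau> p \<longleftrightarrow>
     prob_space M \<and> stochastic_kernel p \<and>
     (\<forall>t. \<tau> t \<in> measurable M (count_space UNIV)) \<and>
     (\<forall>t (s::nat \<Rightarrow> 'i) j.
        measure M {\<omega>\<in>space M. (\<forall>k\<le>t. \<tau> k \<omega> = s k) \<and> \<tau> (Suc t) \<omega> = j}
        = measure M {\<omega>\<in>space M. \<forall>k\<le>t. \<tau> k \<omega> = s k} * p (s t) j)"

primrec zproc :: "('i \<Rightarrow> real ^ 'n ^ 'n) \<Rightarrow> (nat \<Rightarrow> 'a \<Rightarrow> 'i) \<Rightarrow> real ^ 'n \<Rightarrow> nat \<Rightarrow> 'a \<Rightarrow> real ^ 'n" where
  "zproc A \<tau> z0 0 \<omega> = z0"
| "zproc A \<tau> z0 (Suc t) \<omega> = A (\<tau> (Suc t) \<omega>) *v zproc A \<tau> z0 t \<omega>"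

end

theory Submission
  imports Defs
begin

text \<open>
  Write \<open>g\<^sub>w(\<eta>) = ln (\<Sum>\<^sub>j w\<^sup>j \<phi>\<^sup>j\<^sub>\<eta>)\<close>. For nonnegative \<open>A\<close> and \<open>z\<close> one has
  \<open>\<parallel>A z\<parallel> = \<Sum>\<^sub>j \<phi>\<^sup>j z\<^sup>j\<close>, so once \<open>l \<le> z(t)/\<parallel>z(t)\<parallel> \<le> u\<close> the increment
  \<open>ln \<parallel>z(t+1)\<parallel> - ln \<parallel>z(t)\<parallel>\<close> lies between \<open>g\<^sub>l(\<tau>\<^sub>t\<^sub>+\<^sub>1)\<close> and \<open>g\<^sub>u(\<tau>\<^sub>t\<^sub>+\<^sub>1)\<close>.
  Telescoping, almost surely the time averages of \<open>g\<^sub>l(\<tau>\<^sub>s)\<close> are eventually below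
  \<open>log \<lambda>\<^sub>S + \<epsilon>\<close> and those of \<open>g\<^sub>u(\<tau>\<^sub>s)\<close> eventually above \<open>log \<lambda>\<^sub>S - \<epsilon>\<close>.
  Ergodicity of the family makes \<open>g\<^sub>l\<close> and \<open>g\<^sub>u\<close> bounded; since the law of \<open>\<tau>\<^sub>t\<close>
  converges to \<open>\<pi>\<close>, the expectations of these averages converge (Cesaro) to \<open>\<Sum>\<^sub>\<eta> \<pi>\<^sub>\<eta> g(\<eta>)\<close>,
  and dominated convergence turns the almost sure eventual bounds into bounds on these limits.
\<close>

section \<open>Infinite sums and averages\<close>

lemma sum_pos_obtains_pos:
  fixes f :: "'a \<Rightarrow> 'b::{ordered_comm_monoid_add, linorder}"
  assumes "0 < sum f A"
  obtains x where "x \<in> A" "0 < f x"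
proof (rule ccontr)
  assume "\<not> thesis"
  then have "sum f A \<le> 0"
    using that by (intro sum_nonpos) (metis not_le)
  then show False using assms by simp
qed

lemma has_sum_swap_nonneg:
  fixes f :: "'a \<Rightarrow> 'b \<Rightarrow> real"
  assumes nonneg: "\<And>x y. 0 \<le> f x y"
    and rows: "\<And>x. (f x has_sum g x) UNIV" and total: "(g has_sum s) UNIV"
  shows "((\<lambda>y. \<Sum>\<^sub>\<infinity>x. f x y) has_sum s) UNIV"
proof -
  have summable: "(\<lambda>(x, y). f x y) summable_on UNIV \<times> UNIV"
    by (rule summable_on_SigmaI[OF _ has_sum_imp_summable[OF total]]) (use rows nonneg in auto)
  then have "(\<lambda>(y, x). f x y) summable_on UNIV \<times> UNIV"
    by (subst (asm) summable_on_swap) simp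
  then have columns: "(\<lambda>x. f x y) summable_on UNIV" for y
    using summable_on_SigmaD1 by fastforce
  have "((\<lambda>(x, y). f x y) has_sum s) (UNIV \<times> UNIV)"
    by (rule has_sum_SigmaI[OF _ total]) (use rows summable in auto)
  then have "((\<lambda>(y, x). f x y) has_sum s) (UNIV \<times> UNIV)"
    by (subst (asm) has_sum_swap) simp
  then show ?thesis
    by (rule has_sum_SigmaD) (use columns in auto)
qed

lemma summable_on_mult_bounded:
  fixes q f :: "'i \<Rightarrow> real"
  assumes q: "q summable_on A" "\<And>j. 0 \<le> q j" and f: "\<And>j. \<bar>f j\<bar> \<le> K"
  shows "(\<lambda>j. q j * f j) summable_on A"
proof (rule abs_summable_summable)
  show "(\<lambda>j. norm (q j * f j)) summable_on A"
    by (rule summable_on_comparison_test[OF summable_on_cmult_right[OF q(1), of K]])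
       (use mult_left_mono[OF f q(2)] q(2) in \<open>auto simp: abs_mult mult.commute\<close>)
qed

lemma infsum_weighted_tail_bound:
  fixes q f :: "'i \<Rightarrow> real"
  assumes q: "(q has_sum 1) UNIV" "\<And>j. 0 \<le> q j" and f: "\<And>j. \<bar>f j\<bar> \<le> K"
    and F: "finite F"
  shows "\<bar>(\<Sum>\<^sub>\<infinity>j. q j * f j) - (\<Sum>j\<in>F. q j * f j)\<bar> \<le> K * (1 - sum q F)"
proof -
  have qs: "q summable_on -F"
    using has_sum_imp_summable[OF q(1)] by (rule summable_on_subset_banach) simp
  have qfs: "(\<lambda>j. q j * f j) summable_on -F"
    by (rule summable_on_mult_bounded[OF qs q(2) f])
  have "(\<Sum>\<^sub>\<infinity>j\<in>-F. q j) = 1 - sum q F"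
    using infsum_Un_disjoint[OF _ qs, of F] F infsumI[OF q(1)] by simp
  moreover have "(\<Sum>\<^sub>\<infinity>j. q j * f j) = (\<Sum>j\<in>F. q j * f j) + (\<Sum>\<^sub>\<infinity>j\<in>-F. q j * f j)"
    using infsum_Un_disjoint[OF _ qfs, of F] F by simp
  moreover have "\<bar>\<Sum>\<^sub>\<infinity>j\<in>-F. q j * f j\<bar> \<le> K * (\<Sum>\<^sub>\<infinity>j\<in>-F. q j)"
  proof -
    have bnd: "\<bar>q j * f j\<bar> \<le> K * q j" for j
      using mult_left_mono[OF f q(2)] q(2) by (simp add: abs_mult mult.commute)
    have "q j * f j \<le> K * q j" "- K * q j \<le> q j * f j" for j
      using bnd[of j] unfolding abs_le_iff by linarith+
    then have "(\<Sum>\<^sub>\<infinity>j\<in>-F. q j * f j) \<le> (\<Sum>\<^sub>\<infinity>j\<in>-F. K * q j)"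
      "(\<Sum>\<^sub>\<infinity>j\<in>-F. - K * q j) \<le> (\<Sum>\<^sub>\<infinity>j\<in>-F. q j * f j)"
      by (intro infsum_mono qfs summable_on_cmult_right qs; simp)+
    then show ?thesis
      by (simp add: infsum_cmult_right' infsum_uminus abs_le_iff)
  qed
  ultimately show ?thesis by simp
qed

lemma infsum_weighted_diff_bound:
  fixes q \<pi> f :: "'i \<Rightarrow> real"
  assumes q: "(q has_sum 1) UNIV" "\<And>j. 0 \<le> q j"
    and \<pi>: "(\<pi> has_sum 1) UNIV" "\<And>j. 0 \<le> \<pi> j"
    and f: "\<And>j. \<bar>f j\<bar> \<le> K" and F: "finite F"
  shows "\<bar>(\<Sum>\<^sub>\<infinity>j. q j * f j) - (\<Sum>\<^sub>\<infinity>j. \<pi> j * f j)\<bar>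
           \<le> 2 * K * (1 - sum \<pi> F) + 2 * K * (\<Sum>j\<in>F. \<bar>q j - \<pi> j\<bar>)"
proof -
  define S where "S = (\<Sum>j\<in>F. \<bar>q j - \<pi> j\<bar>)"
  have K: "0 \<le> K" using f[of undefined] by linarith
  have finite_part: "\<bar>(\<Sum>j\<in>F. q j * f j) - (\<Sum>j\<in>F. \<pi> j * f j)\<bar> \<le> K * S"
  proof -
    have "\<bar>(\<Sum>j\<in>F. q j * f j) - (\<Sum>j\<in>F. \<pi> j * f j)\<bar> = \<bar>\<Sum>j\<in>F. (q j - \<pi> j) * f j\<bar>"
      by (simp add: sum_subtractf left_diff_distrib)
    also have "\<dots> \<le> (\<Sum>j\<in>F. \<bar>q j - \<pi> j\<bar> * K)"
      by (rule order_trans[OF sum_abs sum_mono]) (simp add: abs_mult f mult_left_mono)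
    finally show ?thesis by (simp add: S_def sum_distrib_left mult.commute)
  qed
  have "sum \<pi> F - sum q F \<le> S"
    unfolding S_def sum_subtractf[symmetric] by (rule sum_mono) simp
  then have "K * (1 - sum q F) \<le> K * ((1 - sum \<pi> F) + S)"
    using K by (intro mult_left_mono) auto
  then have "K * (1 - sum q F) \<le> K * (1 - sum \<pi> F) + K * S"
    by (simp only: distrib_left)
  then show ?thesis
    using infsum_weighted_tail_bound[where f=f, OF q f F] infsum_weighted_tail_bound[where f=f, OF \<pi> f F] finite_part
    unfolding S_def by linarith
qed

lemma tendsto_infsum_weighted_bounded:
  fixes q :: "nat \<Rightarrow> 'i \<Rightarrow> real" and \<pi> f :: "'i \<Rightarrow> real"
  assumes q: "\<And>t. (q t has_sum 1) UNIV" "\<And>t j. 0 \<le> q t j"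
    and \<pi>: "(\<pi> has_sum 1) UNIV" "\<And>j. 0 \<le> \<pi> j"
    and lim: "\<And>j. (\<lambda>t. q t j) \<longlonglongrightarrow> \<pi> j" and f: "\<And>j. \<bar>f j\<bar> \<le> K"
  shows "(\<lambda>t. \<Sum>\<^sub>\<infinity>j. q t j * f j) \<longlonglongrightarrow> (\<Sum>\<^sub>\<infinity>j. \<pi> j * f j)"
proof (rule LIMSEQ_I)
  fix r :: real assume r: "0 < r"
  have K: "0 \<le> K" using f[of undefined] by linarith
  define e where "e = r / (4 * K + 1)"
  have e: "0 < e" "4 * K * e < r"
    using r K by (auto simp: e_def field_simps)
  obtain F where F: "finite F" and "dist (sum \<pi> F) 1 \<le> e"
    using has_sum_finite_approximation[OF \<pi>(1) e(1)] by blast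
  moreover have "sum \<pi> F \<le> 1"
    by (rule finite_sum_le_has_sum[OF \<pi>(1) F]) (use \<pi>(2) in auto)
  ultimately have tail: "1 - sum \<pi> F \<le> e" by (simp add: dist_real_def)
  have "(\<lambda>t. \<Sum>j\<in>F. \<bar>q t j - \<pi> j\<bar>) \<longlonglongrightarrow> (\<Sum>j\<in>F. \<bar>\<pi> j - \<pi> j\<bar>)"
    by (intro tendsto_intros lim)
  then obtain N where N: "\<And>t. t \<ge> N \<Longrightarrow> (\<Sum>j\<in>F. \<bar>q t j - \<pi> j\<bar>) < e"
    using LIMSEQ_D[OF _ e(1)] by fastforce
  have "\<bar>(\<Sum>\<^sub>\<infinity>j. q t j * f j) - (\<Sum>\<^sub>\<infinity>j. \<pi> j * f j)\<bar> < r" if "t \<ge> N" for t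
  proof -
    have "2 * K * (1 - sum \<pi> F) + 2 * K * (\<Sum>j\<in>F. \<bar>q t j - \<pi> j\<bar>) \<le> 2 * K * e + 2 * K * e"
      using tail N[OF that] K by (intro add_mono mult_left_mono) auto
    then show ?thesis
      using infsum_weighted_diff_bound[where f=f, OF q(1)[of t] q(2)[of t] \<pi> f F] e(2) by linarith
  qed
  then show "\<exists>N. \<forall>t\<ge>N. norm ((\<Sum>\<^sub>\<infinity>j. q t j * f j) - (\<Sum>\<^sub>\<infinity>j. \<pi> j * f j)) < r"
    by auto
qed

lemma abs_average_le:
  fixes a :: "nat \<Rightarrow> real"
  assumes "\<And>s. \<bar>a s\<bar> \<le> K"
  shows "\<bar>(\<Sum>s<t. a s) / real t\<bar> \<le> K"
proof (cases "t = 0")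
  case True
  then show ?thesis using assms[of 0] by simp
next
  case False
  have "\<bar>\<Sum>s<t. a s\<bar> \<le> real t * K"
    using order_trans[OF sum_abs sum_mono[of "{..<t}" "\<lambda>s. \<bar>a s\<bar>" "\<lambda>_. K"]] assms by simp
  then show ?thesis
    using False by (simp add: abs_divide divide_le_eq mult.commute)
qed

lemma Cesaro_mean_tendsto:
  fixes a :: "nat \<Rightarrow> real"
  assumes a: "a \<longlonglongrightarrow> L"
  shows "(\<lambda>t. (\<Sum>s<t. a s) / real t) \<longlonglongrightarrow> L"
proof (rule LIMSEQ_I)
  fix r :: real assume r: "0 < r"
  obtain N where N: "\<And>s. s \<ge> N \<Longrightarrow> norm (a s - L) < r / 2"
    using LIMSEQ_D[OF a, of "r/2"] r by auto
  define B where "B = (\<Sum>s<N. \<bar>a s - L\<bar>)"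
  have B0: "0 \<le> B" unfolding B_def by (simp add: sum_nonneg)
  obtain N2 :: nat where N2: "real N2 > 2 * B / r" using reals_Archimedean2 by blast
  show "\<exists>no. \<forall>t\<ge>no. norm ((\<Sum>s<t. a s) / real t - L) < r"
  proof (intro exI allI impI)
    fix t assume t: "max (Suc N) N2 \<le> t"
    then have tN: "N \<le> t" and t0: "0 < t" and tN2: "N2 \<le> t" by auto
    have e: "(\<Sum>s<t. a s) / real t - L = (\<Sum>s<t. a s - L) / real t"
      using t0 by (simp add: sum_subtractf field_simps)
    have split: "(\<Sum>s<t. a s - L) = (\<Sum>s<N. a s - L) + (\<Sum>s\<in>{N..<t}. a s - L)"
      using tN by (metis atLeast0LessThan sum.atLeastLessThan_concat zero_le)
    have "\<bar>\<Sum>s\<in>{N..<t}. a s - L\<bar> \<le> (\<Sum>s\<in>{N..<t}. \<bar>a s - L\<bar>)" by (rule sum_abs)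
    also have "\<dots> \<le> (\<Sum>s\<in>{N..<t}. r / 2)"
      by (rule sum_mono) (use N in \<open>auto simp: less_imp_le\<close>)
    also have "\<dots> = real (t - N) * (r / 2)" by simp
    also have "\<dots> \<le> real t * (r / 2)" using r by (intro mult_right_mono) auto
    finally have b2: "\<bar>\<Sum>s\<in>{N..<t}. a s - L\<bar> \<le> real t * (r / 2)" .
    have b1: "\<bar>\<Sum>s<N. a s - L\<bar> \<le> B" unfolding B_def by (rule sum_abs)
    have "\<bar>\<Sum>s<t. a s - L\<bar> \<le> B + real t * (r / 2)" using split b1 b2 by linarith
    moreover have "B < real t * (r / 2)"
    proof -
      have "2 * B / r < real t" using N2 tN2 by linarith
      then have "2 * B < real t * r" using r by (simp add: divide_less_eq)
      then show ?thesis by simp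
    qed
    ultimately have "\<bar>\<Sum>s<t. a s - L\<bar> < real t * r" by linarith
    then show "norm ((\<Sum>s<t. a s) / real t - L) < r"
      using t0 e by (simp add: abs_divide divide_less_eq mult.commute)
  qed
qed

lemma eventually_average_le_of_increments:
  fixes W g :: "nat \<Rightarrow> real"
  assumes incr: "\<forall>\<^sub>F t in sequentially. W t + g t \<le> W (Suc t)"
    and lim: "(\<lambda>t. W t / real t) \<longlonglongrightarrow> L" and "0 < \<epsilon>"
  shows "\<forall>\<^sub>F t in sequentially. (\<Sum>s<t. g s) / real t \<le> L + \<epsilon>"
proof -
  obtain T where T: "\<And>t. t \<ge> T \<Longrightarrow> W t + g t \<le> W (Suc t)"
    using incr unfolding eventually_sequentially by blast
  have telescope: "W T + (\<Sum>s\<in>{T..<t}. g s) \<le> W t" if "t \<ge> T" for t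
    using that
  proof (induction t rule: dec_induct)
    case (step t)
    then show ?case using T[of t] by simp
  qed simp
  define c where "c = (\<Sum>s<T. g s) - W T"
  have "(\<lambda>t. W t / real t + c / real t) \<longlonglongrightarrow> L + 0"
    by (intro tendsto_add lim tendsto_divide_0[OF tendsto_const]
        filterlim_at_top_imp_at_infinity filterlim_real_sequentially)
  then have "\<forall>\<^sub>F t in sequentially. W t / real t + c / real t < L + \<epsilon>"
    using \<open>0 < \<epsilon>\<close> by (intro order_tendstoD(2)) auto
  moreover have "\<forall>\<^sub>F t in sequentially. t \<ge> max T 1"
    by (rule eventually_ge_at_top)
  ultimately show ?thesis
  proof eventually_elim
    case (elim t)
    then have "T \<le> t" "0 < t" by auto
    have "(\<Sum>s<t. g s) = (\<Sum>s<T. g s) + (\<Sum>s\<in>{T..<t}. g s)"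
      using \<open>T \<le> t\<close> by (metis atLeast0LessThan sum.atLeastLessThan_concat zero_le)
    also have "\<dots> \<le> W t + c"
      using telescope[OF \<open>T \<le> t\<close>] unfolding c_def by linarith
    finally have "(\<Sum>s<t. g s) / real t \<le> W t / real t + c / real t"
      using \<open>0 < t\<close> by (simp add: divide_right_mono add_divide_distrib[symmetric])
    then show ?case using elim by linarith
  qed
qed

section \<open>Expectations\<close>

lemma (in finite_measure) has_sum_measure_countable_UN:
  fixes X :: "'i::countable \<Rightarrow> 'a set"
  assumes sets: "\<And>i. X i \<in> sets M" and disj: "disjoint_family X"
  shows "((\<lambda>i. measure M (X i)) has_sum measure M (\<Union>i. X i)) UNIV"
proof -
  have nn: "(\<integral>\<^sup>+i. ennreal (measure M (X i)) \<partial>count_space UNIV) = ennreal (measure M (\<Union>i. X i))"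
    using emeasure_UN_countable[of UNIV X M] sets disj by (simp add: emeasure_eq_measure)
  then have "integrable (count_space UNIV) (\<lambda>i. measure M (X i))"
    by (intro integrableI_bounded) auto
  then have abs: "Infinite_Set_Sum.abs_summable_on (\<lambda>i. measure M (X i)) UNIV"
    by (simp add: abs_summable_on_def)
  have "(\<Sum>\<^sub>\<infinity>i. measure M (X i)) = measure M (\<Union>i. X i)"
    using nn nn_integral_conv_infsetsum[OF abs] abs abs_summable_equivalent
    by (simp add: infsetsum_nonneg infsetsum_infsum[symmetric])
  moreover have "(\<lambda>i. measure M (X i)) summable_on UNIV"
    using abs abs_summable_equivalent abs_summable_summable by blast
  ultimately show ?thesis by (metis has_sum_infsum)
qed

lemma sets_Collect_eq_countable_valued:
  fixes X :: "'a \<Rightarrow> 'i::countable"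
  assumes "X \<in> measurable M (count_space UNIV)"
  shows "{\<omega>\<in>space M. X \<omega> = j} \<in> sets M"
  using assms by measurable

lemma (in prob_space) has_sum_prob_countable_values:
  fixes X :: "'a \<Rightarrow> 'i::countable"
  assumes X: "X \<in> measurable M (count_space UNIV)"
  shows "((\<lambda>j. prob {\<omega>\<in>space M. X \<omega> = j}) has_sum 1) UNIV"
proof -
  have "((\<lambda>j. prob {\<omega>\<in>space M. X \<omega> = j}) has_sum prob (\<Union>j. {\<omega>\<in>space M. X \<omega> = j})) UNIV"
    by (rule has_sum_measure_countable_UN[OF sets_Collect_eq_countable_valued[OF X]])
       (auto simp: disjoint_family_on_def)
  moreover have "(\<Union>j. {\<omega>\<in>space M. X \<omega> = j}) = space M" by auto
  ultimately show ?thesis by (simp add: prob_space)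
qed

lemma (in prob_space) integral_countable_valued_nonneg:
  fixes X :: "'a \<Rightarrow> 'i::countable" and G :: "'i \<Rightarrow> real"
  assumes X: "X \<in> measurable M (count_space UNIV)" and G: "\<And>j. 0 \<le> G j" "\<And>j. G j \<le> K"
  shows "(\<integral>\<omega>. G (X \<omega>) \<partial>M) = (\<Sum>\<^sub>\<infinity>j. prob {\<omega>\<in>space M. X \<omega> = j} * G j)"
proof -
  define E where "E j = {\<omega>\<in>space M. X \<omega> = j}" for j
  have E: "E j \<in> sets M" for j
    unfolding E_def by (rule sets_Collect_eq_countable_valued[OF X])
  have "(\<integral>\<^sup>+\<omega>. ennreal (G (X \<omega>)) \<partial>M)
      = (\<integral>\<^sup>+\<omega>. (\<integral>\<^sup>+j. ennreal (G j) * indicator (E j) \<omega> \<partial>count_space UNIV) \<partial>M)"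
  proof (rule nn_integral_cong)
    fix \<omega> assume "\<omega> \<in> space M"
    then show "ennreal (G (X \<omega>)) = (\<integral>\<^sup>+j. ennreal (G j) * indicator (E j) \<omega> \<partial>count_space UNIV)"
      by (subst nn_integral_count_space'[where A="{X \<omega>}"]) (auto simp: E_def)
  qed
  also have "\<dots> = (\<integral>\<^sup>+j. (\<integral>\<^sup>+\<omega>. ennreal (G j) * indicator (E j) \<omega> \<partial>M) \<partial>count_space UNIV)"
    by (rule nn_integral_count_space_nn_integral) (use E in auto)
  also have "\<dots> = (\<integral>\<^sup>+j. ennreal (prob (E j) * G j) \<partial>count_space UNIV)"
    using E G by (intro nn_integral_cong)
      (simp add: nn_integral_cmult_indicator emeasure_eq_measure ennreal_mult'' mult.commute)
  finally have nn: "(\<integral>\<^sup>+\<omega>. ennreal (G (X \<omega>)) \<partial>M) = (\<integral>\<^sup>+j. ennreal (prob (E j) * G j) \<partial>count_space UNIV)" .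
  have "(\<lambda>j. prob (E j) * G j) summable_on UNIV"
    using G unfolding E_def
    by (intro summable_on_mult_bounded[OF has_sum_imp_summable[OF has_sum_prob_countable_values[OF X]]])
      auto
  then have abs: "Infinite_Set_Sum.abs_summable_on (\<lambda>j. prob (E j) * G j) UNIV"
    using G by (simp add: abs_summable_equivalent[symmetric] abs_mult)
  have "(\<integral>\<omega>. G (X \<omega>) \<partial>M) = enn2real (\<integral>\<^sup>+\<omega>. ennreal (G (X \<omega>)) \<partial>M)"
    using G X by (intro integral_eq_nn_integral) auto
  also have "\<dots> = infsetsum (\<lambda>j. prob (E j) * G j) UNIV"
    using G by (simp add: nn nn_integral_conv_infsetsum[OF abs] infsetsum_nonneg)
  also have "\<dots> = (\<Sum>\<^sub>\<infinity>j. prob (E j) * G j)"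
    using abs abs_summable_equivalent by (intro infsetsum_infsum) blast
  finally show ?thesis unfolding E_def .
qed

lemma (in prob_space) integral_countable_valued:
  fixes X :: "'a \<Rightarrow> 'i::countable" and f :: "'i \<Rightarrow> real"
  assumes X: "X \<in> measurable M (count_space UNIV)" and f: "\<And>j. \<bar>f j\<bar> \<le> K"
  shows "(\<integral>\<omega>. f (X \<omega>) \<partial>M) = (\<Sum>\<^sub>\<infinity>j. prob {\<omega>\<in>space M. X \<omega> = j} * f j)"
proof -
  define q where "q j = prob {\<omega>\<in>space M. X \<omega> = j}" for j
  have q: "(q has_sum 1) UNIV" "\<And>j. 0 \<le> q j"
    using has_sum_prob_countable_values[OF X] unfolding q_def by auto
  have shifted: "(\<integral>\<omega>. f (X \<omega>) + K \<partial>M) = (\<Sum>\<^sub>\<infinity>j. q j * (f j + K))"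
  proof -
    have "0 \<le> f j + K" "f j + K \<le> 2 * K" for j
      using f[of j] by (simp_all add: abs_le_iff)
    then show ?thesis
      unfolding q_def by (rule integral_countable_valued_nonneg[OF X])
  qed
  have "integrable M (\<lambda>\<omega>. f (X \<omega>))"
    using X f by (intro integrable_const_bound[where B=K]) auto
  then have "(\<integral>\<omega>. f (X \<omega>) + K \<partial>M) = (\<integral>\<omega>. f (X \<omega>) \<partial>M) + K"
    by (simp add: prob_space)
  moreover have "(\<Sum>\<^sub>\<infinity>j. q j * (f j + K)) = (\<Sum>\<^sub>\<infinity>j. q j * f j) + K"
    using infsum_add[OF summable_on_mult_bounded[where f=f, OF has_sum_imp_summable[OF q(1)] q(2) f]
        summable_on_cmult_left[OF has_sum_imp_summable[OF q(1)]]]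
    by (simp add: distrib_left infsum_cmult_left' infsumI[OF q(1)])
  ultimately show ?thesis using shifted unfolding q_def by simp
qed

lemma (in prob_space) integral_limit_le_of_AE_eventually_le:
  fixes Y :: "nat \<Rightarrow> 'a \<Rightarrow> real"
  assumes Y: "\<And>t. Y t \<in> borel_measurable M" "\<And>t \<omega>. \<bar>Y t \<omega>\<bar> \<le> K"
    and ae: "\<And>\<epsilon>. \<epsilon> > 0 \<Longrightarrow> AE \<omega> in M. \<forall>\<^sub>F t in sequentially. Y t \<omega> \<le> L + \<epsilon>"
    and lim: "(\<lambda>t. \<integral>\<omega>. Y t \<omega> \<partial>M) \<longlonglongrightarrow> m"
  shows "m \<le> L"
proof (rule field_le_epsilon)
  fix \<epsilon> :: real assume "0 < \<epsilon>"
  \<comment> \<open>the excess of \<open>Y t\<close> over \<open>L + \<epsilon>\<close> is bounded and vanishes eventually, almost surely\<close>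
  define V where "V t \<omega> = max (Y t \<omega>) (L + \<epsilon>) - (L + \<epsilon>)" for t \<omega>
  have V: "V t \<in> borel_measurable M" "\<bar>V t \<omega>\<bar> \<le> K + \<bar>L + \<epsilon>\<bar>" for t \<omega>
    using Y(1) Y(2)[of t \<omega>] unfolding V_def by (measurable, auto simp: max_def)
  have "AE \<omega> in M. (\<lambda>t. V t \<omega>) \<longlonglongrightarrow> 0"
    using ae[OF \<open>0 < \<epsilon>\<close>]
  proof eventually_elim
    case (elim \<omega>)
    then have "\<forall>\<^sub>F t in sequentially. V t \<omega> = 0"
      by eventually_elim (auto simp: V_def max_def)
    then show ?case by (rule tendsto_eventually)
  qed
  then have "(\<lambda>t. \<integral>\<omega>. V t \<omega> \<partial>M) \<longlonglongrightarrow> (\<integral>\<omega>. 0 \<partial>M)"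
    by (intro integral_dominated_convergence[where w="\<lambda>_. K + \<bar>L + \<epsilon>\<bar>"]) (use V in auto)
  then have "(\<lambda>t. L + \<epsilon> + (\<integral>\<omega>. V t \<omega> \<partial>M)) \<longlonglongrightarrow> L + \<epsilon> + 0"
    by (intro tendsto_add tendsto_const) simp
  moreover have "(\<integral>\<omega>. Y t \<omega> \<partial>M) \<le> L + \<epsilon> + (\<integral>\<omega>. V t \<omega> \<partial>M)" for t
  proof -
    have "integrable M (V t)"
      using V by (intro integrable_const_bound[where B="K + \<bar>L + \<epsilon>\<bar>"]) auto
    moreover have "integrable M (Y t)"
      using Y by (intro integrable_const_bound[where B=K]) auto
    ultimately
    have "(\<integral>\<omega>. Y t \<omega> \<partial>M) \<le> (\<integral>\<omega>. L + \<epsilon> + V t \<omega> \<partial>M)"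
      by (intro integral_mono) (auto simp: V_def)
    also have "\<dots> = L + \<epsilon> + (\<integral>\<omega>. V t \<omega> \<partial>M)"
      using \<open>integrable M (V t)\<close> by (simp add: prob_space)
    finally show ?thesis .
  qed
  ultimately show "m \<le> L + \<epsilon>"
    using LIMSEQ_le[OF lim] by fastforce
qed

section \<open>Markov chains\<close>

definition state_prob :: "'a measure \<Rightarrow> (nat \<Rightarrow> 'a \<Rightarrow> 'i) \<Rightarrow> nat \<Rightarrow> 'i \<Rightarrow> real" where
  "state_prob M \<tau> t j = measure M {\<omega>\<in>space M. \<tau> t \<omega> = j}"

lemma markov_chainD:
  assumes "markov_chain M \<tau> p"
  shows "prob_space M" "stochastic_kernel p" "\<tau> t \<in> measurable M (count_space UNIV)"
  using assms unfolding markov_chain_def by auto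

lemma markov_chain_state_prob_has_sum:
  fixes \<tau> :: "nat \<Rightarrow> 'a \<Rightarrow> 'i::countable"
  assumes "markov_chain M \<tau> p"
  shows "(state_prob M \<tau> t has_sum 1) UNIV" "0 \<le> state_prob M \<tau> t j"
  using prob_space.has_sum_prob_countable_values[OF markov_chainD(1,3)[OF assms]]
  unfolding state_prob_def by auto

lemma markov_chain_transition:
  fixes \<tau> :: "nat \<Rightarrow> 'a \<Rightarrow> 'i::countable"
  assumes mc: "markov_chain M \<tau> p"
  shows "measure M {\<omega>\<in>space M. \<tau> t \<omega> = k \<and> \<tau> (Suc t) \<omega> = j} = state_prob M \<tau> t k * p k j"
proof -
  interpret prob_space M by (rule markov_chainD(1)[OF mc])
  have ev: "\<And>t i. {\<omega>\<in>space M. \<tau> t \<omega> = i} \<in> sets M"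
    using markov_chainD(3)[OF mc] sets_Collect_eq_countable_valued by blast
  have hist: "\<And>K c. finite K \<Longrightarrow> {\<omega>\<in>space M. \<forall>k\<in>K. \<tau> k \<omega> = c k} \<in> sets M"
    using ev by (intro sets.sets_Collect_finite_All) auto
  have markov: "measure M {\<omega>\<in>space M. (\<forall>k\<in>{m..t}. \<tau> k \<omega> = s k) \<and> \<tau> (Suc t) \<omega> = j}
      = measure M {\<omega>\<in>space M. \<forall>k\<in>{m..t}. \<tau> k \<omega> = s k} * p (s t) j" if "m \<le> t" for m s
    using that
  proof (induction m arbitrary: s)
    case 0
    then show ?case
      using mc unfolding markov_chain_def by (simp add: atLeast0AtMost atMost_iff Ball_def)
  next
    case (Suc m)
    \<comment> \<open>sum the identity for histories starting at \<open>m\<close> over the possible values of \<open>\<tau> m\<close>\<close>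
    define X where "X i = {\<omega>\<in>space M. (\<forall>k\<in>{m..t}. \<tau> k \<omega> = (s(m:=i)) k) \<and> \<tau> (Suc t) \<omega> = j}" for i
    define Y where "Y i = {\<omega>\<in>space M. \<forall>k\<in>{m..t}. \<tau> k \<omega> = (s(m:=i)) k}" for i
    have mt: "m < t" using Suc.prems by simp
    have "X i = Y i \<inter> {\<omega>\<in>space M. \<tau> (Suc t) \<omega> = j}" for i
      unfolding X_def Y_def by auto
    then have sets: "X i \<in> sets M" "Y i \<in> sets M" for i
      using hist ev unfolding Y_def by auto
    have disj: "disjoint_family X" "disjoint_family Y"
      unfolding disjoint_family_on_def X_def Y_def using mt by (auto dest!: bspec[where x=m])
    have "((\<lambda>i. measure M (X i)) has_sum measure M (\<Union>i. X i)) UNIV"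
      by (rule has_sum_measure_countable_UN[OF sets(1) disj(1)])
    moreover have "((\<lambda>i. measure M (X i)) has_sum measure M (\<Union>i. Y i) * p (s t) j) UNIV"
      using has_sum_cmult_left[OF has_sum_measure_countable_UN[OF sets(2) disj(2)]]
        Suc.IH[of "s(m:=i)" for i] mt unfolding X_def Y_def by simp
    moreover have "(\<Union>i. X i) = {\<omega>\<in>space M. (\<forall>k\<in>{Suc m..t}. \<tau> k \<omega> = s k) \<and> \<tau> (Suc t) \<omega> = j}"
      "(\<Union>i. Y i) = {\<omega>\<in>space M. \<forall>k\<in>{Suc m..t}. \<tau> k \<omega> = s k}"
      unfolding X_def Y_def using mt by (auto simp: Ball_def)
    ultimately show ?case using has_sum_unique by metis
  qed
  show ?thesis
    using markov[of t "\<lambda>_. k"] by (simp add: state_prob_def)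
qed

lemma markov_chain_state_prob_Suc:
  fixes \<tau> :: "nat \<Rightarrow> 'a \<Rightarrow> 'i::countable"
  assumes mc: "markov_chain M \<tau> p"
  shows "((\<lambda>k. state_prob M \<tau> t k * p k j) has_sum state_prob M \<tau> (Suc t) j) UNIV"
proof -
  interpret prob_space M by (rule markov_chainD(1)[OF mc])
  have ev: "\<And>t i. {\<omega>\<in>space M. \<tau> t \<omega> = i} \<in> sets M"
    using markov_chainD(3)[OF mc] sets_Collect_eq_countable_valued by blast
  have "{\<omega>\<in>space M. \<tau> t \<omega> = k \<and> \<tau> (Suc t) \<omega> = j}
      = {\<omega>\<in>space M. \<tau> t \<omega> = k} \<inter> {\<omega>\<in>space M. \<tau> (Suc t) \<omega> = j}" for k
    by auto
  then have "((\<lambda>k. measure M {\<omega>\<in>space M. \<tau> t \<omega> = k \<and> \<tau> (Suc t) \<omega> = j})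
      has_sum measure M (\<Union>k. {\<omega>\<in>space M. \<tau> t \<omega> = k \<and> \<tau> (Suc t) \<omega> = j})) UNIV"
    using ev by (intro has_sum_measure_countable_UN) (auto simp: disjoint_family_on_def)
  moreover have "(\<Union>k. {\<omega>\<in>space M. \<tau> t \<omega> = k \<and> \<tau> (Suc t) \<omega> = j}) = {\<omega>\<in>space M. \<tau> (Suc t) \<omega> = j}"
    by auto
  ultimately show ?thesis
    by (simp add: markov_chain_transition[OF mc] state_prob_def)
qed

lemma nstep_nonneg:
  assumes "\<And>i j. 0 \<le> p i j"
  shows "0 \<le> nstep p t i j"
  using assms by (induction t arbitrary: j) (auto intro!: infsum_nonneg)

lemma markov_chain_state_prob_nstep:
  fixes \<tau> :: "nat \<Rightarrow> 'a \<Rightarrow> 'i::countable"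
  assumes mc: "markov_chain M \<tau> p"
  shows "((\<lambda>i. state_prob M \<tau> 0 i * nstep p t i j) has_sum state_prob M \<tau> t j) UNIV"
proof (induction t arbitrary: j)
  case 0
  show ?case
    by (rule has_sum_finite_neutralI[where B="{j}"]) auto
next
  case (Suc t)
  have p: "0 \<le> p i j" for i j
    using markov_chainD(2)[OF mc] unfolding stochastic_kernel_def by blast
  have "((\<lambda>i. \<Sum>\<^sub>\<infinity>k. state_prob M \<tau> 0 i * nstep p t i k * p k j) has_sum state_prob M \<tau> (Suc t) j) UNIV"
  proof (rule has_sum_swap_nonneg)
    show "0 \<le> state_prob M \<tau> 0 i * nstep p t i k * p k j" for k i
      using markov_chain_state_prob_has_sum(2)[OF mc] nstep_nonneg[of p, OF p] p by simp
    show "((\<lambda>i. state_prob M \<tau> 0 i * nstep p t i k * p k j) has_sum state_prob M \<tau> t k * p k j) UNIV" for k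
      by (rule has_sum_cmult_left[OF Suc.IH])
  qed (rule markov_chain_state_prob_Suc[OF mc])
  then show ?case
    by (simp add: infsum_cmult_right' mult.assoc)
qed

lemma markov_chain_state_prob_tendsto:
  fixes \<tau> :: "nat \<Rightarrow> 'a \<Rightarrow> 'i::countable"
  assumes mc: "markov_chain M \<tau> p"
    and unif: "\<And>m i j. \<bar>nstep p m i j - \<pi> j\<bar> \<le> \<delta> m" and \<delta>: "\<delta> \<longlonglongrightarrow> 0"
  shows "(\<lambda>t. state_prob M \<tau> t j) \<longlonglongrightarrow> \<pi> j"
proof -
  note q0 = markov_chain_state_prob_has_sum[OF mc, of 0]
  have err: "((\<lambda>i. state_prob M \<tau> 0 i * (nstep p t i j - \<pi> j)) has_sum state_prob M \<tau> t j - \<pi> j) UNIV" for t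
    using has_sum_add[OF markov_chain_state_prob_nstep[OF mc] has_sum_cmult_right[OF q0(1), of "- \<pi> j"]]
    by (simp add: right_diff_distrib mult.commute)
  have "\<bar>state_prob M \<tau> t j - \<pi> j\<bar> \<le> \<delta> t" for t
  proof -
    have bnd: "\<bar>state_prob M \<tau> 0 i * (nstep p t i j - \<pi> j)\<bar> \<le> state_prob M \<tau> 0 i * \<delta> t" for i
      using mult_left_mono[OF unif q0(2)] q0(2) by (simp add: abs_mult)
    have "state_prob M \<tau> t j - \<pi> j \<le> 1 * \<delta> t"
      by (rule has_sum_mono[OF err has_sum_cmult_left[OF q0(1)]]) (use bnd in \<open>simp add: abs_le_iff\<close>)
    moreover have "1 * - \<delta> t \<le> state_prob M \<tau> t j - \<pi> j"
      by (rule has_sum_mono[OF has_sum_cmult_left[OF q0(1)] err]) (use bnd in \<open>simp add: abs_le_iff minus_le_iff\<close>)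
    ultimately show ?thesis by linarith
  qed
  then have "(\<lambda>t. state_prob M \<tau> t j - \<pi> j) \<longlonglongrightarrow> 0"
    by (intro Lim_null_comparison[OF _ \<delta>] always_eventually) auto
  then show ?thesis by (simp add: LIM_zero_iff)
qed

lemma markov_chain_expectation_tendsto:
  fixes \<tau> :: "nat \<Rightarrow> 'a \<Rightarrow> 'i::countable" and f :: "'i \<Rightarrow> real"
  assumes mc: "markov_chain M \<tau> p"
    and unif: "\<And>m i j. \<bar>nstep p m i j - \<pi> j\<bar> \<le> \<delta> m" and \<delta>: "\<delta> \<longlonglongrightarrow> 0"
    and \<pi>: "(\<pi> has_sum 1) UNIV" "\<And>j. 0 \<le> \<pi> j" and f: "\<And>j. \<bar>f j\<bar> \<le> K"
  shows "(\<lambda>t. \<integral>\<omega>. f (\<tau> t \<omega>) \<partial>M) \<longlonglongrightarrow> (\<Sum>\<^sub>\<infinity>j. \<pi> j * f j)"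
proof -
  have "(\<integral>\<omega>. f (\<tau> t \<omega>) \<partial>M) = (\<Sum>\<^sub>\<infinity>j. state_prob M \<tau> t j * f j)" for t
    using prob_space.integral_countable_valued[OF markov_chainD(1,3)[OF mc] f]
    by (simp add: state_prob_def)
  moreover have "(\<lambda>t. \<Sum>\<^sub>\<infinity>j. state_prob M \<tau> t j * f j) \<longlonglongrightarrow> (\<Sum>\<^sub>\<infinity>j. \<pi> j * f j)"
    by (rule tendsto_infsum_weighted_bounded[OF markov_chain_state_prob_has_sum[OF mc] \<pi>
          markov_chain_state_prob_tendsto[OF mc unif \<delta>] f])
  ultimately show ?thesis by simp
qed

lemma markov_chain_time_average_expectation_tendsto:
  fixes \<tau> :: "nat \<Rightarrow> 'a \<Rightarrow> 'i::countable" and f :: "'i \<Rightarrow> real"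
  assumes mc: "markov_chain M \<tau> p"
    and unif: "\<And>m i j. \<bar>nstep p m i j - \<pi> j\<bar> \<le> \<delta> m" and \<delta>: "\<delta> \<longlonglongrightarrow> 0"
    and \<pi>: "(\<pi> has_sum 1) UNIV" "\<And>j. 0 \<le> \<pi> j" and f: "\<And>j. \<bar>f j\<bar> \<le> K"
  shows "(\<lambda>t. \<integral>\<omega>. (\<Sum>s<t. f (\<tau> (Suc s) \<omega>)) / real t \<partial>M) \<longlonglongrightarrow> (\<Sum>\<^sub>\<infinity>j. \<pi> j * f j)"
proof -
  interpret prob_space M by (rule markov_chainD(1)[OF mc])
  have "integrable M (\<lambda>\<omega>. f (\<tau> s \<omega>))" for s
    using markov_chainD(3)[OF mc] f by (intro integrable_const_bound[where B=K]) auto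
  then have eq: "(\<integral>\<omega>. (\<Sum>s<t. f (\<tau> (Suc s) \<omega>)) / real t \<partial>M) = (\<Sum>s<t. \<integral>\<omega>. f (\<tau> (Suc s) \<omega>) \<partial>M) / real t" for t
    by (simp add: integral_sum)
  show ?thesis
    unfolding eq by (rule Cesaro_mean_tendsto[OF LIMSEQ_Suc[OF markov_chain_expectation_tendsto[OF mc unif \<delta> \<pi> f]]])
qed

lemma markov_chain_mean_le_of_increments:
  fixes \<tau> :: "nat \<Rightarrow> 'a \<Rightarrow> 'i::countable" and f :: "'i \<Rightarrow> real" and W :: "nat \<Rightarrow> 'a \<Rightarrow> real"
  assumes mc: "markov_chain M \<tau> p"
    and unif: "\<And>m i j. \<bar>nstep p m i j - \<pi> j\<bar> \<le> \<delta> m" and \<delta>: "\<delta> \<longlonglongrightarrow> 0"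
    and \<pi>: "(\<pi> has_sum 1) UNIV" "\<And>j. 0 \<le> \<pi> j" and f: "\<And>j. \<bar>f j\<bar> \<le> K"
    and growth: "AE \<omega> in M. (\<lambda>t. W t \<omega> / real t) \<longlonglongrightarrow> L"
    and incr: "AE \<omega> in M. \<forall>\<^sub>F t in sequentially. W t \<omega> + f (\<tau> (Suc t) \<omega>) \<le> W (Suc t) \<omega>"
  shows "(\<Sum>\<^sub>\<infinity>j. \<pi> j * f j) \<le> L"
proof -
  interpret prob_space M by (rule markov_chainD(1)[OF mc])
  show ?thesis
  proof (rule integral_limit_le_of_AE_eventually_le)
    show "(\<lambda>\<omega>. (\<Sum>s<t. f (\<tau> (Suc s) \<omega>)) / real t) \<in> borel_measurable M" for t
      using markov_chainD(3)[OF mc] by measurable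
    show "\<bar>(\<Sum>s<t. f (\<tau> (Suc s) \<omega>)) / real t\<bar> \<le> K" for t \<omega>
      by (rule abs_average_le) (rule f)
    show "AE \<omega> in M. \<forall>\<^sub>F t in sequentially. (\<Sum>s<t. f (\<tau> (Suc s) \<omega>)) / real t \<le> L + \<epsilon>"
      if "\<epsilon> > 0" for \<epsilon>
      using growth incr by eventually_elim (rule eventually_average_le_of_increments[OF _ _ that])
  qed (rule markov_chain_time_average_expectation_tendsto[OF mc unif \<delta> \<pi> f])
qed

lemma markov_chain_mean_ge_of_increments:
  fixes \<tau> :: "nat \<Rightarrow> 'a \<Rightarrow> 'i::countable" and f :: "'i \<Rightarrow> real" and W :: "nat \<Rightarrow> 'a \<Rightarrow> real"
  assumes mc: "markov_chain M \<tau> p"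
    and unif: "\<And>m i j. \<bar>nstep p m i j - \<pi> j\<bar> \<le> \<delta> m" and \<delta>: "\<delta> \<longlonglongrightarrow> 0"
    and \<pi>: "(\<pi> has_sum 1) UNIV" "\<And>j. 0 \<le> \<pi> j" and f: "\<And>j. \<bar>f j\<bar> \<le> K"
    and growth: "AE \<omega> in M. (\<lambda>t. W t \<omega> / real t) \<longlonglongrightarrow> L"
    and incr: "AE \<omega> in M. \<forall>\<^sub>F t in sequentially. W (Suc t) \<omega> \<le> W t \<omega> + f (\<tau> (Suc t) \<omega>)"
  shows "L \<le> (\<Sum>\<^sub>\<infinity>j. \<pi> j * f j)"
proof -
  have "(\<Sum>\<^sub>\<infinity>j. \<pi> j * - f j) \<le> - L"
  proof (rule markov_chain_mean_le_of_increments[OF mc unif \<delta> \<pi>, where W="\<lambda>t \<omega>. - W t \<omega>"])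
    show "\<bar>- f j\<bar> \<le> K" for j using f[of j] by simp
    show "AE \<omega> in M. (\<lambda>t. - W t \<omega> / real t) \<longlonglongrightarrow> - L"
      using growth by (auto elim!: eventually_mono dest: tendsto_minus)
    show "AE \<omega> in M. \<forall>\<^sub>F t in sequentially. - W t \<omega> + - f (\<tau> (Suc t) \<omega>) \<le> - W (Suc t) \<omega>"
      using incr by (auto elim!: eventually_mono)
  qed
  then show ?thesis by (simp add: infsum_uminus)
qed

section \<open>The population process\<close>

lemma ln_weighted_colsum_bounded:
  fixes A :: "'i \<Rightarrow> real ^ 'n ^ 'n" and w :: "real ^ 'n"
  assumes erg: "ergodic_family A" and w: "\<And>j. 0 \<le> w $ j"
    and pos: "\<And>\<eta>. 0 < (\<Sum>j\<in>UNIV. w $ j * colsum A \<eta> j)"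
  obtains K where "\<And>\<eta>. \<bar>ln (\<Sum>j\<in>UNIV. w $ j * colsum A \<eta> j)\<bar> \<le> K"
proof -
  obtain \<alpha> \<beta> :: real where "0 < \<alpha>" and A0: "\<And>e i j. 0 \<le> A e $ i $ j"
    and A\<beta>: "\<And>e i j. A e $ i $ j \<le> \<beta>" and A\<alpha>: "\<And>e i j. 0 < A e $ i $ j \<Longrightarrow> \<alpha> \<le> A e $ i $ j"
    using erg unfolding ergodic_family_def by blast
  define S where "S \<eta> = (\<Sum>j\<in>UNIV. w $ j * colsum A \<eta> j)" for \<eta>
  have colsum_nonneg: "0 \<le> colsum A \<eta> j" for \<eta> j
    unfolding colsum_def by (simp add: sum_nonneg A0)
  have "colsum A \<eta> j \<le> real CARD('n) * \<beta>" for \<eta> j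
    unfolding colsum_def using sum_mono[of UNIV "\<lambda>i. A \<eta> $ i $ j" "\<lambda>_. \<beta>"] A\<beta> by simp
  then have upper: "S \<eta> \<le> (\<Sum>j\<in>UNIV. w $ j * (real CARD('n) * \<beta>))" for \<eta>
    unfolding S_def using w by (intro sum_mono mult_left_mono) auto
  define c where "c = Min ((\<lambda>j. w $ j) ` {j. 0 < w $ j}) * \<alpha>"
  \<comment> \<open>a positive term of \<open>S \<eta>\<close> has a positive weight and a positive matrix entry, each bounded below\<close>
  have lower: "c \<le> S \<eta>" "0 < c" for \<eta>
  proof -
    obtain j where "0 < w $ j * colsum A \<eta> j"
      using pos[of \<eta>] by (rule sum_pos_obtains_pos)
    then have wj: "0 < w $ j" and "0 < colsum A \<eta> j"
      using w[of j] colsum_nonneg[of \<eta> j] by (auto simp: zero_less_mult_iff)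
    obtain i where "0 < A \<eta> $ i $ j"
      using \<open>0 < colsum A \<eta> j\<close> unfolding colsum_def by (rule sum_pos_obtains_pos)
    then have "\<alpha> \<le> A \<eta> $ i $ j" by (rule A\<alpha>)
    also have "\<dots> \<le> colsum A \<eta> j"
      unfolding colsum_def using A0 by (intro member_le_sum) auto
    finally have "\<alpha> \<le> colsum A \<eta> j" .
    moreover have "Min ((\<lambda>j. w $ j) ` {j. 0 < w $ j}) \<le> w $ j"
      using wj by (intro Min_le) auto
    moreover have "0 < Min ((\<lambda>j. w $ j) ` {j. 0 < w $ j})"
      using wj by (subst Min_gr_iff) auto
    ultimately have "c \<le> w $ j * colsum A \<eta> j"
      unfolding c_def using \<open>0 < \<alpha>\<close> by (intro mult_mono) auto
    also have "\<dots> \<le> S \<eta>"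
      unfolding S_def using w colsum_nonneg by (intro member_le_sum) auto
    finally show "c \<le> S \<eta>" .
    show "0 < c"
      unfolding c_def using \<open>0 < \<alpha>\<close> \<open>0 < Min ((\<lambda>j. w $ j) ` {j. 0 < w $ j})\<close> by simp
  qed
  have "\<bar>ln (S \<eta>)\<bar> \<le> \<bar>ln c\<bar> + \<bar>ln (\<Sum>j\<in>UNIV. w $ j * (real CARD('n) * \<beta>))\<bar>" for \<eta>
  proof -
    have "ln c \<le> ln (S \<eta>)" "ln (S \<eta>) \<le> ln (\<Sum>j\<in>UNIV. w $ j * (real CARD('n) * \<beta>))"
      using lower(1)[of \<eta>] lower(2) upper[of \<eta>] pos[of \<eta>] unfolding S_def by auto
    then show ?thesis by linarith
  qed
  then show ?thesis using that unfolding S_def by blast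
qed

lemma weighted_colsum_mono:
  assumes "\<And>e i j. 0 \<le> A e $ i $ j" and "\<And>j. l $ j \<le> u $ j"
  shows "(\<Sum>j\<in>UNIV. l $ j * colsum A \<eta> j) \<le> (\<Sum>j\<in>UNIV. u $ j * colsum A \<eta> j)"
  using assms unfolding colsum_def by (intro sum_mono mult_right_mono) (auto intro: sum_nonneg)

lemma zproc_nonneg:
  assumes "\<And>e i j. 0 \<le> A e $ i $ j" and "\<And>i. 0 \<le> z0 $ i"
  shows "0 \<le> zproc A \<tau> z0 t \<omega> $ i"
  using assms by (induction t arbitrary: i) (simp_all add: matrix_vector_mult_def sum_nonneg)

lemma l1norm_matrix_vector_mult_nonneg:
  fixes B :: "real ^ 'n ^ 'n" and x :: "real ^ 'n"
  assumes "\<And>i j. 0 \<le> B $ i $ j" and "\<And>j. 0 \<le> x $ j"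
  shows "l1norm (B *v x) = (\<Sum>j\<in>UNIV. (\<Sum>i\<in>UNIV. B $ i $ j) * x $ j)"
proof -
  have "l1norm (B *v x) = (\<Sum>i\<in>UNIV. \<Sum>j\<in>UNIV. B $ i $ j * x $ j)"
    unfolding l1norm_def matrix_vector_mult_def using assms
    by (intro sum.cong refl) (simp add: sum_nonneg)
  also have "\<dots> = (\<Sum>j\<in>UNIV. (\<Sum>i\<in>UNIV. B $ i $ j) * x $ j)"
    by (subst sum.swap) (simp add: sum_distrib_right)
  finally show ?thesis .
qed

lemma l1norm_matrix_vector_mult_bounds:
  fixes B :: "real ^ 'n ^ 'n" and x l u :: "real ^ 'n"
  assumes B: "\<And>i j. 0 \<le> B $ i $ j" and x: "\<And>j. 0 \<le> x $ j"
    and lx: "\<And>j. l $ j \<le> x $ j / l1norm x" and xu: "\<And>j. x $ j / l1norm x \<le> u $ j"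
  shows "l1norm x * (\<Sum>j\<in>UNIV. l $ j * (\<Sum>i\<in>UNIV. B $ i $ j)) \<le> l1norm (B *v x)"
    and "l1norm (B *v x) \<le> l1norm x * (\<Sum>j\<in>UNIV. u $ j * (\<Sum>i\<in>UNIV. B $ i $ j))"
proof -
  define N where "N = l1norm x"
  have col: "0 \<le> (\<Sum>i\<in>UNIV. B $ i $ j)" for j
    by (simp add: sum_nonneg B)
  have "N \<noteq> 0 \<or> x = 0"
    using x unfolding N_def l1norm_def by (auto simp: vec_eq_iff sum_nonneg_eq_0_iff)
  then have split: "l1norm (B *v x) = N * (\<Sum>j\<in>UNIV. (\<Sum>i\<in>UNIV. B $ i $ j) * (x $ j / N))"
    using l1norm_matrix_vector_mult_nonneg[OF B x]
    by (auto simp: N_def sum_distrib_left l1norm_def matrix_vector_mult_def)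
  have "N \<ge> 0"
    unfolding N_def l1norm_def by (simp add: sum_nonneg)
  moreover have "(\<Sum>j\<in>UNIV. l $ j * (\<Sum>i\<in>UNIV. B $ i $ j)) \<le> (\<Sum>j\<in>UNIV. (\<Sum>i\<in>UNIV. B $ i $ j) * (x $ j / N))"
    "(\<Sum>j\<in>UNIV. (\<Sum>i\<in>UNIV. B $ i $ j) * (x $ j / N)) \<le> (\<Sum>j\<in>UNIV. u $ j * (\<Sum>i\<in>UNIV. B $ i $ j))"
    using mult_right_mono[OF lx col] mult_right_mono[OF xu col]
    unfolding N_def by (auto intro!: sum_mono simp: mult.commute)
  ultimately show "l1norm x * (\<Sum>j\<in>UNIV. l $ j * (\<Sum>i\<in>UNIV. B $ i $ j)) \<le> l1norm (B *v x)"
    and "l1norm (B *v x) \<le> l1norm x * (\<Sum>j\<in>UNIV. u $ j * (\<Sum>i\<in>UNIV. B $ i $ j))"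
    unfolding split by (auto simp: N_def intro: mult_left_mono)
qed

lemma ln_l1norm_matrix_vector_mult_bounds:
  fixes B :: "real ^ 'n ^ 'n" and x l u :: "real ^ 'n"
  assumes B: "\<And>i j. 0 \<le> B $ i $ j" and x: "\<And>j. 0 \<le> x $ j"
    and lx: "\<And>j. l $ j \<le> x $ j / l1norm x" and xu: "\<And>j. x $ j / l1norm x \<le> u $ j"
    and pos: "0 < (\<Sum>j\<in>UNIV. l $ j * (\<Sum>i\<in>UNIV. B $ i $ j))"
  shows "ln (l1norm x) + ln (\<Sum>j\<in>UNIV. l $ j * (\<Sum>i\<in>UNIV. B $ i $ j)) \<le> ln (l1norm (B *v x))"
    and "ln (l1norm (B *v x)) \<le> ln (l1norm x) + ln (\<Sum>j\<in>UNIV. u $ j * (\<Sum>i\<in>UNIV. B $ i $ j))"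
proof -
  define a where "a = (\<Sum>j\<in>UNIV. l $ j * (\<Sum>i\<in>UNIV. B $ i $ j))"
  define b where "b = (\<Sum>j\<in>UNIV. u $ j * (\<Sum>i\<in>UNIV. B $ i $ j))"
  have col: "0 \<le> (\<Sum>i\<in>UNIV. B $ i $ j)" for j
    by (simp add: sum_nonneg B)
  have "l1norm x \<noteq> 0"
  proof
    assume "l1norm x = 0"
    then have "l $ j * (\<Sum>i\<in>UNIV. B $ i $ j) \<le> 0" for j
      using lx[of j] col[of j] by (simp add: mult_nonpos_nonneg)
    then show False
      using pos sum_nonpos[of UNIV "\<lambda>j. l $ j * (\<Sum>i\<in>UNIV. B $ i $ j)"] by simp
  qed
  then have N: "0 < l1norm x"
    unfolding l1norm_def by (simp add: sum_nonneg order_le_neq_trans)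
  have "a \<le> b"
    unfolding a_def b_def using lx xu col by (intro sum_mono mult_right_mono) (auto intro: order_trans)
  then have "0 < a" "0 < b"
    using pos unfolding a_def by linarith+
  moreover have "l1norm x * a \<le> l1norm (B *v x)" "l1norm (B *v x) \<le> l1norm x * b"
    unfolding a_def b_def by (rule l1norm_matrix_vector_mult_bounds[OF B x lx xu])+
  moreover have "0 < l1norm x * a" "0 < l1norm x * b"
    using N \<open>0 < a\<close> \<open>0 < b\<close> by simp_all
  ultimately have "ln (l1norm x * a) \<le> ln (l1norm (B *v x))" "ln (l1norm (B *v x)) \<le> ln (l1norm x * b)"
    by (simp_all add: order_less_le_trans)
  then show "ln (l1norm x) + ln a \<le> ln (l1norm (B *v x))" "ln (l1norm (B *v x)) \<le> ln (l1norm x) + ln b"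
    using N \<open>0 < a\<close> \<open>0 < b\<close> by (simp_all add: ln_mult)
qed

lemma ln_l1norm_zproc_Suc_bounds:
  assumes A0: "\<And>e i j. 0 \<le> A e $ i $ j" and z0: "\<And>i. 0 \<le> z0 $ i"
    and lpos: "\<And>\<eta>. 0 < (\<Sum>j\<in>UNIV. l $ j * colsum A \<eta> j)"
    and bounds: "\<forall>j. l $ j \<le> zproc A \<tau> z0 t \<omega> $ j / l1norm (zproc A \<tau> z0 t \<omega>) \<and>
                     zproc A \<tau> z0 t \<omega> $ j / l1norm (zproc A \<tau> z0 t \<omega>) \<le> u $ j"
  shows "ln (l1norm (zproc A \<tau> z0 t \<omega>)) + ln (\<Sum>j\<in>UNIV. l $ j * colsum A (\<tau> (Suc t) \<omega>) j)
           \<le> ln (l1norm (zproc A \<tau> z0 (Suc t) \<omega>))"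
    and "ln (l1norm (zproc A \<tau> z0 (Suc t) \<omega>))
           \<le> ln (l1norm (zproc A \<tau> z0 t \<omega>)) + ln (\<Sum>j\<in>UNIV. u $ j * colsum A (\<tau> (Suc t) \<omega>) j)"
proof -
  have lx: "l $ j \<le> zproc A \<tau> z0 t \<omega> $ j / l1norm (zproc A \<tau> z0 t \<omega>)"
    and xu: "zproc A \<tau> z0 t \<omega> $ j / l1norm (zproc A \<tau> z0 t \<omega>) \<le> u $ j" for j
    using bounds by auto
  have pos: "0 < (\<Sum>j\<in>UNIV. l $ j * (\<Sum>i\<in>UNIV. A (\<tau> (Suc t) \<omega>) $ i $ j))"
    using lpos unfolding colsum_def by blast
  show "ln (l1norm (zproc A \<tau> z0 t \<omega>)) + ln (\<Sum>j\<in>UNIV. l $ j * colsum A (\<tau> (Suc t) \<omega>) j)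
           \<le> ln (l1norm (zproc A \<tau> z0 (Suc t) \<omega>))"
    and "ln (l1norm (zproc A \<tau> z0 (Suc t) \<omega>))
           \<le> ln (l1norm (zproc A \<tau> z0 t \<omega>)) + ln (\<Sum>j\<in>UNIV. u $ j * colsum A (\<tau> (Suc t) \<omega>) j)"
    using ln_l1norm_matrix_vector_mult_bounds[OF A0 zproc_nonneg[where A=A, OF A0 z0] lx xu pos]
    unfolding colsum_def by simp_all
qed

theorem mainTheorem5:
  fixes M :: "'a measure"
    and \<tau> :: "nat \<Rightarrow> 'a \<Rightarrow> 'i::countable"
    and p :: "'i \<Rightarrow> 'i \<Rightarrow> real"
    and \<pi> :: "'i \<Rightarrow> real"
    and A :: "'i \<Rightarrow> real ^ 'n ^ 'n"
    and z0 l u :: "real ^ 'n"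
    and log_lambda_S :: real
  assumes mc: "markov_chain M \<tau> p"
    and stat: "stationary_distribution p \<pi>"
    and uniq: "\<And>\<pi>'. stationary_distribution p \<pi>' \<Longrightarrow> \<pi>' = \<pi>"
    and geom: "\<exists>C \<rho>::real. 0 \<le> \<rho> \<and> \<rho> < 1 \<and> (\<forall>m i j. \<bar>nstep p m i j - \<pi> j\<bar> \<le> C * \<rho> ^ m)"
    and erg: "ergodic_family A"
    and z0: "\<forall>i. 0 \<le> z0 $ i" "z0 \<noteq> 0"
    and SGR: "AE \<omega> in M. (\<lambda>t. ln (l1norm (zproc A \<tau> z0 t \<omega>)) / real t) \<longlonglongrightarrow> log_lambda_S"
    and lu_nonneg: "\<forall>j. 0 \<le> l $ j" "\<forall>j. 0 \<le> u $ j"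
    and bounds: "AE \<omega> in M. eventually (\<lambda>t. \<forall>j.
                    l $ j \<le> zproc A \<tau> z0 t \<omega> $ j / l1norm (zproc A \<tau> z0 t \<omega>) \<and>
                    zproc A \<tau> z0 t \<omega> $ j / l1norm (zproc A \<tau> z0 t \<omega>) \<le> u $ j) sequentially"
    and lpos: "\<forall>\<eta>. 0 < (\<Sum>j\<in>UNIV. l $ j * colsum A \<eta> j)"
  shows "(\<Sum>\<^sub>\<infinity>\<eta>. \<pi> \<eta> * ln (\<Sum>j\<in>UNIV. l $ j * colsum A \<eta> j)) \<le> log_lambda_S
         \<and> log_lambda_S \<le> (\<Sum>\<^sub>\<infinity>\<eta>. \<pi> \<eta> * ln (\<Sum>j\<in>UNIV. u $ j * colsum A \<eta> j))"
proof -
  interpret prob_space M by (rule markov_chainD(1)[OF mc])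
  obtain C \<rho> :: real where "0 \<le> \<rho>" "\<rho> < 1" and unif: "\<And>m i j. \<bar>nstep p m i j - \<pi> j\<bar> \<le> C * \<rho> ^ m"
    using geom by blast
  then have \<delta>: "(\<lambda>m. C * \<rho> ^ m) \<longlonglongrightarrow> 0"
    by (intro tendsto_mult_right_zero LIMSEQ_power_zero) simp
  have \<pi>: "(\<pi> has_sum 1) UNIV" "\<And>j. 0 \<le> \<pi> j"
    using stat unfolding stationary_distribution_def by (auto simp: summable_iff_has_sum_infsum)
  have A0: "\<And>e i j. 0 \<le> A e $ i $ j"
    using erg unfolding ergodic_family_def by blast
  have "AE \<omega> in M. \<forall>j. l $ j \<le> u $ j"
    using bounds by (rule eventually_mono) (auto dest!: eventually_happens'[OF sequentially_bot] intro: order_trans)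
  then have upos: "0 < (\<Sum>j\<in>UNIV. u $ j * colsum A \<eta> j)" for \<eta>
    using lpos[rule_format, of \<eta>] weighted_colsum_mono[where A=A and \<eta>=\<eta>, OF A0, of l u] by simp
  obtain Kl Ku where Kl: "\<And>\<eta>. \<bar>ln (\<Sum>j\<in>UNIV. l $ j * colsum A \<eta> j)\<bar> \<le> Kl"
    and Ku: "\<And>\<eta>. \<bar>ln (\<Sum>j\<in>UNIV. u $ j * colsum A \<eta> j)\<bar> \<le> Ku"
    using ln_weighted_colsum_bounded[OF erg] lu_nonneg lpos upos by metis
  note step = ln_l1norm_zproc_Suc_bounds[OF A0 z0(1)[rule_format] lpos[rule_format]]
  have "(\<Sum>\<^sub>\<infinity>\<eta>. \<pi> \<eta> * ln (\<Sum>j\<in>UNIV. l $ j * colsum A \<eta> j)) \<le> log_lambda_S"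
    using bounds by (rule markov_chain_mean_le_of_increments[OF mc unif \<delta> \<pi> Kl SGR eventually_mono])
      (elim eventually_mono, erule step)
  moreover have "log_lambda_S \<le> (\<Sum>\<^sub>\<infinity>\<eta>. \<pi> \<eta> * ln (\<Sum>j\<in>UNIV. u $ j * colsum A \<eta> j))"
    using bounds by (rule markov_chain_mean_ge_of_increments[OF mc unif \<delta> \<pi> Ku SGR eventually_mono])
      (elim eventually_mono, erule step)
  ultimately show ?thesis ..
qed

end
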